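(* There exist symmetric pseudo-Boolean functions of $n$ variables for which any $y$-linear quadratization must involve at least $\Omega(n/\log n)$ auxiliary variables; that is, there is a constant $c>0$ such that for infinitely many $n$ there is a symmetric $f:\{0,1\}^n\to\mathbb{R}$ every $y$-linear quadratization of which uses at least $c\,n/\log n$ auxiliary variables.
   Context: A pseudo-Boolean function is a map $\{0,1\}^n\to\mathbb{R}$; it is symmetric if its value depends only on the Hamming weight. A quadratization of $f$ using $m$ auxiliary variables is a polynomial $g(x,y)$ of degree at most $2$ in $x_1,\ldots,x_n,y_1,\ldots,y_m$ such that $f(x)=\min\{g(x,y):y\in\{0,1\}^m\}$ for all $x\in\{0,1\}^n$. It is $y$-linear if it contains no product of two auxiliary variables, i.e. $g(x,y)=q(x)+\sum_{i=1}^m a_i(x)y_i$ with $q$ quadratic and each $a_i$ affine in $x$. *)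

theory Defs
  imports Complex_Main
begin

text \<open>Points of the Boolean cube {0,1}^n, represented as functions nat => bool that are
  False outside the index range {0..<n}.\<close>
definition bvecs :: "nat \<Rightarrow> (nat \<Rightarrow> bool) set" where
  "bvecs n = {x. \<forall>j\<ge>n. \<not> x j}"

text \<open>A pseudo-Boolean function of n variables is f :: (nat => bool) => real, only its
  values on bvecs n matter. Symmetric: value depends only on the Hamming weight.\<close>
definition symmetric_pbf :: "nat \<Rightarrow> ((nat \<Rightarrow> bool) \<Rightarrow> real) \<Rightarrow> bool" where
  "symmetric_pbf n f \<longleftrightarrow>
     (\<forall>x\<in>bvecs n. \<forall>x'\<in>bvecs n. card {j. j < n \<and> x j} = card {j. j < n \<and> x' j} \<longrightarrow> f x = f x')"

definition ylin_poly ::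
  "nat \<Rightarrow> nat \<Rightarrow> real \<Rightarrow> (nat \<Rightarrow> real) \<Rightarrow> (nat \<Rightarrow> nat \<Rightarrow> real) \<Rightarrow> (nat \<Rightarrow> real) \<Rightarrow> (nat \<Rightarrow> nat \<Rightarrow> real)
   \<Rightarrow> (nat \<Rightarrow> bool) \<Rightarrow> (nat \<Rightarrow> bool) \<Rightarrow> real" where
  "ylin_poly n m c b d a0 a x y =
     c + (\<Sum>j<n. b j * of_bool (x j))
       + (\<Sum>j<n. \<Sum>k<n. d j k * of_bool (x j) * of_bool (x k))
       + (\<Sum>i<m. (a0 i + (\<Sum>j<n. a i j * of_bool (x j))) * of_bool (y i))"

definition has_ylin_quadratization :: "nat \<Rightarrow> nat \<Rightarrow> ((nat \<Rightarrow> bool) \<Rightarrow> real) \<Rightarrow> bool" where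
  "has_ylin_quadratization n m f \<longleftrightarrow>
     (\<exists>c b d a0 a. \<forall>x\<in>bvecs n.
        f x = Min ((\<lambda>y. ylin_poly n m c b d a0 a x y) ` bvecs m))"

end

theory Submission
  imports Defs "HOL-Library.Function_Algebras" "HOL-Library.Discrete_Functions"
    "HOL-Computational_Algebra.Polynomial"
begin

(* Proof idea (a dimension count in the space of functions on {0,1}^r).
   For r \<ge> 1 put n = 2^r and f_t(x) = t^|x|, which is symmetric.  Composing with the map
   spread r : {0,1}^r \<rightarrow> {0,1}^n that copies bit s of z into the 2^s coordinates of the
   dyadic block [2^s, 2^(s+1)) turns |x| into the binary value of z, so f_t becomes the
   function G_t(z) = t^(binval z) on {0,1}^r (code_power r t below).  If f_t has a y-linear quadratization with m
   auxiliaries, minimising over y replaces each y_i by the indicator of the set P_i where its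
   coefficient a_i(x) is negative; hence G_t lies in the span of at most (r+1)^2 + m(r+1)
   functions (products of at most two bits, and indicators of P_i times at most one bit).
   There are only finitely many choices of the sets P_i, and by a Vandermonde argument any
   2^r distinct functions G_t are linearly independent.  So if (r+1)^2 + m(r+1) < 2^r, only
   finitely many t admit such a quadratization.  Choosing t outside this finite set gives
   (r+1)^2 + m(r+1) \<ge> 2^r for every quadratization, i.e. m \<ge> n / (8 ln n).
   The file proves, in order: facts about the cube and about minimising over y, the binary
   encoding, linear algebra of the functions G_t, the spanning family, the finiteness of the
   exceptional set of t, the numerical estimate, and finally the theorem. *)


subsection \<open>The Boolean cube and minimisation over the auxiliary variables\<close>

lemma finite_bvecs: "finite (bvecs m)"
proof -
  have "bvecs m \<subseteq> (\<lambda>S j. j \<in> S) ` Pow {..<m}"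
  proof
    fix x assume "x \<in> bvecs m"
    then have "x = (\<lambda>j. j \<in> {j. j < m \<and> x j})"
      by (auto simp: bvecs_def fun_eq_iff) (meson leI)
    then show "x \<in> (\<lambda>S j. j \<in> S) ` Pow {..<m}" by blast
  qed
  then show ?thesis by (rule finite_subset) auto
qed

text \<open>Minimising a function that is affine in y over the cube sets y_i = 1 exactly
  where its coefficient is negative.\<close>
lemma cube_min_affine:
  fixes A :: "nat \<Rightarrow> real"
  shows "Min ((\<lambda>y. K + (\<Sum>i<m. A i * of_bool (y i))) ` bvecs m) = K + (\<Sum>i<m. min 0 (A i))"
proof (rule Min_eqI)
  show "finite ((\<lambda>y. K + (\<Sum>i<m. A i * of_bool (y i))) ` bvecs m)" using finite_bvecs by simp
next
  fix v assume "v \<in> (\<lambda>y. K + (\<Sum>i<m. A i * of_bool (y i))) ` bvecs m"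
  then obtain y where v: "v = K + (\<Sum>i<m. A i * of_bool (y i))" by auto
  have "(\<Sum>i<m. min 0 (A i)) \<le> (\<Sum>i<m. A i * of_bool (y i))" by (rule sum_mono) auto
  then show "K + (\<Sum>i<m. min 0 (A i)) \<le> v" using v by simp
next
  let ?y = "\<lambda>i. i < m \<and> A i < 0"
  have y: "?y \<in> bvecs m" by (auto simp: bvecs_def)
  have "(\<Sum>i<m. A i * of_bool (?y i)) = (\<Sum>i<m. min 0 (A i))" by (rule sum.cong) auto
  then show "K + (\<Sum>i<m. min 0 (A i)) \<in> (\<lambda>y. K + (\<Sum>i<m. A i * of_bool (y i))) ` bvecs m"
    by (intro rev_image_eqI[OF y]) simp
qed

lemma ylin_poly_min:
  "Min ((\<lambda>y. ylin_poly n m c b d a0 a x y) ` bvecs m) =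
     c + (\<Sum>j<n. b j * of_bool (x j)) + (\<Sum>j<n. \<Sum>k<n. d j k * of_bool (x j) * of_bool (x k))
       + (\<Sum>i<m. min 0 (a0 i + (\<Sum>j<n. a i j * of_bool (x j))))"
  unfolding ylin_poly_def by (rule cube_min_affine)


subsection \<open>Binary encoding of weights\<close>

definition binval :: "nat \<Rightarrow> (nat \<Rightarrow> bool) \<Rightarrow> nat" where
  "binval r z = (\<Sum>s<r. of_bool (z s) * 2^s)"

text \<open>The point of {0,1}^(2^r) whose coordinates in the dyadic block [2^s, 2^(s+1)) all
  equal z_s (coordinate 0 is unused).\<close>
definition spread :: "nat \<Rightarrow> (nat \<Rightarrow> bool) \<Rightarrow> nat \<Rightarrow> bool" where
  "spread r z = (\<lambda>j. 0 < j \<and> j < 2^r \<and> z (floor_log j))"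

lemma spread_bvecs: "spread r z \<in> bvecs (2^r)"
  by (auto simp: spread_def bvecs_def)

text \<open>Block s has 2^s elements, so the Hamming weight of spread r z is the binary value of z.\<close>
lemma spread_weight: "card {j. j < 2^r \<and> spread r z j} = binval r z"
proof (induction r)
  case 0
  have "{j. j < 2^0 \<and> spread 0 z j} = {}" by (auto simp: spread_def)
  then show ?case by (simp add: binval_def)
next
  case (Suc r)
  let ?old = "{j. j < 2^r \<and> spread r z j}"
    and ?top = "if z r then {2^r..<2^Suc r} else ({} :: nat set)"
  have top: "floor_log j = r" if "2^r \<le> j" "j < 2 * 2^r" for j
    using that by (intro floor_log_eqI) auto
  have "{j. j < 2^Suc r \<and> spread (Suc r) z j} = ?old \<union> ?top"
    using top by (auto simp: spread_def intro: order.strict_trans2[of 0 "2^r"]) (metis not_less)+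
  moreover have "?old \<inter> ?top = {}" by auto
  moreover have "card ?top = of_bool (z r) * 2^r" by simp
  ultimately show ?case using Suc.IH by (simp add: card_Un_disjoint binval_def)
qed

lemma binval_surj: "k < 2^r \<Longrightarrow> \<exists>z\<in>bvecs r. binval r z = k"
proof (induction r arbitrary: k)
  case 0
  then show ?case by (auto simp: bvecs_def binval_def)
next
  case (Suc r)
  show ?case
  proof (cases "k < 2^r")
    case True
    then obtain z where z: "z \<in> bvecs r" "binval r z = k" using Suc.IH by blast
    then have "z \<in> bvecs (Suc r)" "binval (Suc r) z = k" by (auto simp: bvecs_def binval_def)
    then show ?thesis by blast
  next
    case False
    have "k - 2^r < 2^r" using Suc.prems by simp
    then obtain z where z: "z \<in> bvecs r" "binval r z = k - 2^r" using Suc.IH by blast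
    have "z(r := True) \<in> bvecs (Suc r)" using z by (auto simp: bvecs_def)
    moreover have "binval (Suc r) (z(r := True)) = binval r z + 2^r"
      unfolding binval_def by (auto intro!: sum.cong)
    ultimately show ?thesis using z(2) False by (metis le_add_diff_inverse2 not_less)
  qed
qed

lemma spread_coord: "(\<forall>z. \<not> spread r z j) \<or> (\<exists>s<r. \<forall>z. spread r z j = z s)"
proof (cases "0 < j \<and> j < 2^r")
  case True
  then have "(2::nat) ^ floor_log j < 2^r" using floor_log_exp2_le[of j] by linarith
  then have "floor_log j < r" by (simp add: power_strict_increasing_iff)
  then show ?thesis using True by (auto simp: spread_def)
qed (auto simp: spread_def)


subsection \<open>The vector space of real functions on the cube\<close>

lemma sum_fun_apply:
  "finite A \<Longrightarrow> (\<Sum>i\<in>A. (g i :: 'a \<Rightarrow> 'b::comm_monoid_add)) z = (\<Sum>i\<in>A. g i z)"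
  by (induction A rule: finite_induct) (auto simp: plus_fun_def zero_fun_def)

interpretation fun_vs: vector_space "\<lambda>(c::real) (f::(nat\<Rightarrow>bool)\<Rightarrow>real). (\<lambda>z. c * f z)"
  by unfold_locales (auto simp: algebra_simps fun_eq_iff plus_fun_def)

definition restrict_cube :: "nat \<Rightarrow> ((nat\<Rightarrow>bool)\<Rightarrow>real) \<Rightarrow> (nat\<Rightarrow>bool) \<Rightarrow> real" where
  "restrict_cube r h = (\<lambda>z. if z \<in> bvecs r then h z else 0)"

lemma restrict_cube_cong: "(\<And>z. z \<in> bvecs r \<Longrightarrow> g z = h z) \<Longrightarrow> restrict_cube r g = restrict_cube r h"
  by (auto simp: restrict_cube_def fun_eq_iff)

lemma restrict_span_zero: "restrict_cube r (\<lambda>z. 0) \<in> fun_vs.span X"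
proof -
  have "restrict_cube r (\<lambda>z. 0) = 0" by (simp add: restrict_cube_def fun_eq_iff)
  then show ?thesis by (simp add: fun_vs.span_zero)
qed

lemma restrict_span_add:
  assumes "restrict_cube r g \<in> fun_vs.span X" "restrict_cube r h \<in> fun_vs.span X"
  shows "restrict_cube r (\<lambda>z. g z + h z) \<in> fun_vs.span X"
proof -
  have "restrict_cube r (\<lambda>z. g z + h z) = restrict_cube r g + restrict_cube r h"
    by (simp add: restrict_cube_def fun_eq_iff)
  then show ?thesis using fun_vs.span_add[OF assms] by simp
qed

lemma restrict_span_scale:
  assumes "restrict_cube r g \<in> fun_vs.span X"
  shows "restrict_cube r (\<lambda>z. c * g z) \<in> fun_vs.span X"
proof -
  have "restrict_cube r (\<lambda>z. c * g z) = (\<lambda>z. c * restrict_cube r g z)"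
    by (simp add: restrict_cube_def fun_eq_iff)
  then show ?thesis using fun_vs.span_scale[OF assms, of c] by simp
qed

lemma restrict_span_sum:
  "finite J \<Longrightarrow> (\<And>j. j \<in> J \<Longrightarrow> restrict_cube r (g j) \<in> fun_vs.span X) \<Longrightarrow>
    restrict_cube r (\<lambda>z. \<Sum>j\<in>J. g j z) \<in> fun_vs.span X"
proof (induction J rule: finite_induct)
  case empty
  then show ?case using restrict_span_zero by simp
next
  case (insert x F)
  then have "restrict_cube r (\<lambda>z. g x z + (\<Sum>j\<in>F. g j z)) \<in> fun_vs.span X"
    by (intro restrict_span_add) auto
  then show ?case using insert(1,2) by simp
qed

lemma restrict_span_spread:
  assumes "\<And>s. s < r \<Longrightarrow> restrict_cube r (\<lambda>z. w z * of_bool (z s)) \<in> fun_vs.span X"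
  shows "restrict_cube r (\<lambda>z. w z * of_bool (spread r z j)) \<in> fun_vs.span X"
  using spread_coord[of r j]
proof
  assume "\<forall>z. \<not> spread r z j"
  then show ?thesis using restrict_span_zero by simp
next
  assume "\<exists>s<r. \<forall>z. spread r z j = z s"
  then show ?thesis using assms by auto
qed


subsection \<open>The functions t^(binval z) are linearly independent\<close>

definition weight_power :: "nat \<Rightarrow> real \<Rightarrow> (nat\<Rightarrow>bool) \<Rightarrow> real" where
  "weight_power n t x = t ^ card {j. j < n \<and> x j}"

lemma weight_power_symmetric: "symmetric_pbf n (weight_power n t)"
  by (auto simp: symmetric_pbf_def weight_power_def)

text \<open>Its pull-back along spread, as a function on {0,1}^r.\<close>
definition code_power :: "nat \<Rightarrow> real \<Rightarrow> (nat\<Rightarrow>bool) \<Rightarrow> real" where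
  "code_power r t = restrict_cube r (\<lambda>z. t ^ binval r z)"

lemma code_power_eval: "z \<in> bvecs r \<Longrightarrow> code_power r t z = t ^ binval r z"
  by (simp add: code_power_def restrict_cube_def)

text \<open>Pair the moments with the
  Lagrange-type polynomial vanishing at all nodes but t0.\<close>
lemma vandermonde_coeff_zero:
  fixes c :: "real \<Rightarrow> real"
  assumes fin: "finite T" and cT: "card T \<le> N" and moments: "\<forall>k<N. (\<Sum>t\<in>T. c t * t^k) = 0"
    and t0: "t0 \<in> T"
  shows "c t0 = 0"
proof -
  define p where "p = (\<Prod>u\<in>T-{t0}. [:-u,1:])"
  have "degree p \<le> (\<Sum>u\<in>T-{t0}. degree [:-u,1:])"
    unfolding p_def using degree_prod_sum_le[of "T-{t0}" "\<lambda>u. [:-u,1:]"] fin by (simp add: o_def)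
  also have "\<dots> < N" using fin t0 cT card_Diff1_less[OF fin t0] by simp
  finally have deg: "degree p < N" .
  have "(\<Sum>t\<in>T. c t * poly p t) = (\<Sum>k\<le>degree p. coeff p k * (\<Sum>t\<in>T. c t * t^k))"
    by (simp add: poly_altdef sum_distrib_left mult_ac sum.swap[of _ T])
  also have "\<dots> = 0" using moments deg by (intro sum.neutral) auto
  finally have pairing: "(\<Sum>t\<in>T. c t * poly p t) = 0" .
  have poly_p: "poly p t = (\<Prod>u\<in>T-{t0}. t - u)" for t
    unfolding p_def by (simp add: poly_prod)
  have "(\<Sum>t\<in>T. c t * poly p t) = c t0 * poly p t0"
    using fin t0 by (simp add: sum.remove poly_p prod_zero)
  moreover have "poly p t0 \<noteq> 0" unfolding poly_p using fin by (simp add: prod_zero_iff)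
  ultimately show ?thesis using pairing by simp
qed

lemma code_power_inj: assumes "r \<ge> 1" shows "inj_on (code_power r) T"
proof
  fix s t assume "code_power r s = code_power r t"
  have "1 < (2::nat)^r" using assms one_less_power[of "2::nat" r] by simp
  then obtain z where "z \<in> bvecs r" "binval r z = 1" using binval_surj by blast
  then show "s = t" using \<open>code_power r s = code_power r t\<close> by (metis code_power_eval power_one_right)
qed

text \<open>Evaluating a vanishing combination of the code_power r t at points of binary value k
  gives the k-th moment equation for every k < 2^r.\<close>
lemma code_power_independent:
  assumes r: "r \<ge> 1" and fin: "finite T" and cT: "card T \<le> 2^r"
  shows "fun_vs.independent (code_power r ` T)"
proof (rule fun_vs.independent_if_scalars_zero)
  show "finite (code_power r ` T)" using fin by simp
next
  fix c g assume comb: "(\<Sum>g\<in>code_power r ` T. (\<lambda>z. c g * g z)) = 0" and g: "g \<in> code_power r ` T"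
  have comb': "(\<Sum>t\<in>T. (\<lambda>z. c (code_power r t) * code_power r t z)) = 0"
    using comb by (simp add: sum.reindex[OF code_power_inj[OF r]])
  have "\<forall>k<2^r. (\<Sum>t\<in>T. c (code_power r t) * t^k) = 0"
  proof (intro allI impI)
    fix k :: nat assume "k < 2^r"
    then obtain z where z: "z \<in> bvecs r" "binval r z = k" using binval_surj by blast
    have "(\<Sum>t\<in>T. (\<lambda>z. c (code_power r t) * code_power r t z)) z = 0" using comb' by simp
    then show "(\<Sum>t\<in>T. c (code_power r t) * t^k) = 0"
      using z fin by (simp add: sum_fun_apply code_power_eval)
  qed
  moreover obtain t where "t \<in> T" "g = code_power r t" using g by blast
  ultimately show "c g = 0" using vandermonde_coeff_zero[OF fin cT, of "\<lambda>t. c (code_power r t)"] by blast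
qed

lemma finite_code_power_in_span:
  assumes r: "r \<ge> 1" and X: "finite X" "card X < 2^r"
  shows "finite {t. code_power r t \<in> fun_vs.span X}"
proof (rule ccontr)
  assume "infinite {t. code_power r t \<in> fun_vs.span X}"
  then obtain T where T: "T \<subseteq> {t. code_power r t \<in> fun_vs.span X}" "finite T" "card T = 2^r"
    using infinite_arbitrarily_large by blast
  have "fun_vs.independent (code_power r ` T)" using code_power_independent[OF r T(2)] T(3) by simp
  moreover have "code_power r ` T \<subseteq> fun_vs.span X" using T(1) by blast
  ultimately have "card (code_power r ` T) \<le> card X" using fun_vs.independent_span_bound[OF X(1)] by blast
  moreover have "card (code_power r ` T) = 2^r" using card_image[OF code_power_inj[OF r]] T(3) by simp
  ultimately show False using X(2) by simp
qed


subsection \<open>A small spanning family for quadratizations\<close>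

definition quad_monomials :: "nat \<Rightarrow> ((nat\<Rightarrow>bool)\<Rightarrow>real) set" where
  "quad_monomials r = restrict_cube r ` insert (\<lambda>z. 1)
     ((\<lambda>s z. of_bool (z s)) ` {..<r} \<union>
      (\<lambda>(s, s') z. of_bool (z s) * of_bool (z s')) ` ({..<r} \<times> {..<r}))"

definition pattern_monomials :: "nat \<Rightarrow> (nat\<Rightarrow>bool) set \<Rightarrow> ((nat\<Rightarrow>bool)\<Rightarrow>real) set" where
  "pattern_monomials r S = restrict_cube r ` insert (\<lambda>z. of_bool (z \<in> S))
     ((\<lambda>s z. of_bool (z \<in> S) * of_bool (z s)) ` {..<r})"

text \<open>The span of this family contains every minimised y-linear quadratization, where ps lists
  the sets on which the auxiliary variables are switched on.\<close>
definition spanning_family :: "nat \<Rightarrow> (nat\<Rightarrow>bool) set list \<Rightarrow> ((nat\<Rightarrow>bool)\<Rightarrow>real) set" where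
  "spanning_family r ps = quad_monomials r \<union> (\<Union>S\<in>set ps. pattern_monomials r S)"

definition patterns :: "nat \<Rightarrow> nat \<Rightarrow> (nat\<Rightarrow>bool) set list set" where
  "patterns r m = {ps. set ps \<subseteq> Pow (bvecs r) \<and> length ps = m}"

lemma finite_patterns: "finite (patterns r m)"
  unfolding patterns_def by (rule finite_lists_length_eq) (simp add: finite_bvecs)

lemma finite_spanning_family: "finite (spanning_family r ps)"
  by (simp add: spanning_family_def quad_monomials_def pattern_monomials_def)

lemma card_spanning_family:
  assumes "length ps = m"
  shows "card (spanning_family r ps) \<le> (r+1)^2 + m*(r+1)"
proof -
  let ?bits = "(\<lambda>s z. of_bool (z s)) ` {..<r} :: ((nat\<Rightarrow>bool)\<Rightarrow>real) set"
    and ?pairs = "(\<lambda>(s, s') z. of_bool (z s) * of_bool (z s')) ` ({..<r} \<times> {..<r})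
                    :: ((nat\<Rightarrow>bool)\<Rightarrow>real) set"
  have "card (quad_monomials r) \<le> card (insert (\<lambda>z. 1) (?bits \<union> ?pairs))"
    unfolding quad_monomials_def by (rule card_image_le) simp
  also have "\<dots> \<le> Suc (card ?bits + card ?pairs)"
    using card_Un_le[of ?bits ?pairs] by (simp add: card_insert_if)
  also have "\<dots> \<le> Suc (r + r*r)"
    using card_image_le[of "{..<r}" "\<lambda>s z. of_bool (z s) :: real"]
      card_image_le[of "{..<r} \<times> {..<r}" "\<lambda>(s, s') z. of_bool (z s) * of_bool (z s') :: real"]
    by (simp add: card_cartesian_product)
  finally have quad: "card (quad_monomials r) \<le> Suc (r + r*r)" .
  have pattern: "card (pattern_monomials r S) \<le> r + 1" for S
    unfolding pattern_monomials_def
    by (rule order.trans[OF card_image_le], simp,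
        rule order.trans[OF card_insert_le_m1], auto intro: order.trans[OF card_image_le])
  have "card (\<Union>S\<in>set ps. pattern_monomials r S) \<le> (\<Sum>S\<in>set ps. card (pattern_monomials r S))"
    by (rule card_UN_le) simp
  also have "\<dots> \<le> (\<Sum>S\<in>set ps. r + 1)" by (rule sum_mono[OF pattern])
  also have "\<dots> = card (set ps) * (r+1)" by simp
  also have "\<dots> \<le> m * (r+1)" using assms card_length[of ps] by (intro mult_right_mono) simp_all
  finally have patterns: "card (\<Union>S\<in>set ps. pattern_monomials r S) \<le> m * (r+1)" .
  have "card (spanning_family r ps) \<le> card (quad_monomials r) + card (\<Union>S\<in>set ps. pattern_monomials r S)"
    unfolding spanning_family_def by (rule card_Un_le)
  then show ?thesis using quad patterns by (simp add: power2_eq_square algebra_simps)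
qed

lemma minimised_form_in_span:
  fixes r n m :: nat and P :: "nat \<Rightarrow> (nat\<Rightarrow>bool) set"
    and c :: real and b a0 :: "nat \<Rightarrow> real" and d a :: "nat \<Rightarrow> nat \<Rightarrow> real"
  defines "X \<equiv> \<lambda>j z. (of_bool (spread r z j) :: real)"
    and "I \<equiv> \<lambda>i z. (of_bool (z \<in> P i) :: real)"
  shows "restrict_cube r (\<lambda>z. c + (\<Sum>j<n. b j * X j z) + (\<Sum>j<n. \<Sum>k<n. d j k * (X j z * X k z))
           + (\<Sum>i<m. a0 i * I i z + (\<Sum>j<n. a i j * (I i z * X j z))))
         \<in> fun_vs.span (spanning_family r (map P [0..<m]))"
    (is "_ \<in> fun_vs.span ?B")
proof -
  have member: "restrict_cube r g \<in> fun_vs.span ?B" if "restrict_cube r g \<in> ?B" for g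
    using that by (rule fun_vs.span_base)
  have pattern: "pattern_monomials r (P i) \<subseteq> ?B" if "i < m" for i
    using that by (auto simp: spanning_family_def)
  have one: "restrict_cube r (\<lambda>z. 1) \<in> fun_vs.span ?B"
    by (rule member) (simp add: spanning_family_def quad_monomials_def)
  have bit: "restrict_cube r (\<lambda>z. 1 * of_bool (z s)) \<in> fun_vs.span ?B" if "s < r" for s
    by (rule member) (use that in \<open>auto simp: spanning_family_def quad_monomials_def\<close>)
  have bits: "restrict_cube r (\<lambda>z. of_bool (z s) * of_bool (z s')) \<in> fun_vs.span ?B"
    if "s < r" "s' < r" for s s'
    by (rule member) (use that in \<open>auto simp: spanning_family_def quad_monomials_def
          intro!: image_eqI[where x="(s, s')"]\<close>)
  have ind: "restrict_cube r (I i) \<in> fun_vs.span ?B" if "i < m" for i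
    by (rule member, rule subsetD[OF pattern[OF that]]) (simp add: pattern_monomials_def I_def)
  have ind_bit: "restrict_cube r (\<lambda>z. I i z * of_bool (z s)) \<in> fun_vs.span ?B"
    if "i < m" "s < r" for i s
    by (rule member, rule subsetD[OF pattern[OF that(1)]]) (use that(2) in \<open>auto simp: pattern_monomials_def I_def\<close>)
  have lin: "restrict_cube r (\<lambda>z. 1 * X j z) \<in> fun_vs.span ?B" for j
    unfolding X_def by (rule restrict_span_spread) (rule bit)
  have quad: "restrict_cube r (\<lambda>z. X j z * X k z) \<in> fun_vs.span ?B" for j k
  proof -
    have "restrict_cube r (\<lambda>z. of_bool (z s) * X j z) \<in> fun_vs.span ?B" if "s < r" for s
      unfolding X_def by (rule restrict_span_spread) (rule bits[OF that])
    then have "restrict_cube r (\<lambda>z. X j z * of_bool (z s)) \<in> fun_vs.span ?B" if "s < r" for s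
      using that by (simp only: mult.commute)
    then show ?thesis unfolding X_def by (rule restrict_span_spread)
  qed
  have ind_lin: "restrict_cube r (\<lambda>z. I i z * X j z) \<in> fun_vs.span ?B" if "i < m" for i j
    unfolding X_def by (rule restrict_span_spread) (rule ind_bit[OF that])
  have "restrict_cube r (\<lambda>z. c * 1 + (\<Sum>j<n. b j * (1 * X j z))
          + (\<Sum>j<n. \<Sum>k<n. d j k * (X j z * X k z))
          + (\<Sum>i<m. a0 i * I i z + (\<Sum>j<n. a i j * (I i z * X j z)))) \<in> fun_vs.span ?B"
    by (intro restrict_span_add restrict_span_scale[OF one] restrict_span_sum finite_lessThan
        restrict_span_scale lin quad ind ind_lin) simp_all
  then show ?thesis by simp
qed

text \<open>If f_t = weight_power (2^r) t has a y-linear quadratization with m auxiliaries, then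
  minimising over y along spread r exhibits code_power r t in the span of a spanning family;
  the sets P_i are where the coefficient of y_i is negative.\<close>
lemma quadratization_gives_span:
  assumes "has_ylin_quadratization (2^r) m (weight_power (2^r) t)"
  shows "\<exists>ps\<in>patterns r m. code_power r t \<in> fun_vs.span (spanning_family r ps)"
proof -
  define n :: nat where "n = 2^r"
  obtain c b d a0 a where H: "\<forall>x\<in>bvecs n. weight_power n t x =
      Min ((\<lambda>y. ylin_poly n m c b d a0 a x y) ` bvecs m)"
    using assms unfolding has_ylin_quadratization_def n_def by blast
  define X where "X = (\<lambda>j z. (of_bool (spread r z j) :: real))"
  define A where "A = (\<lambda>i z. a0 i + (\<Sum>j<n. a i j * X j z))"
  define P where "P = (\<lambda>i. {z \<in> bvecs r. A i z < 0})"
  define I where "I = (\<lambda>i z. (of_bool (z \<in> P i) :: real))"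
  have "code_power r t = restrict_cube r (\<lambda>z. c + (\<Sum>j<n. b j * X j z)
          + (\<Sum>j<n. \<Sum>k<n. d j k * (X j z * X k z))
          + (\<Sum>i<m. a0 i * I i z + (\<Sum>j<n. a i j * (I i z * X j z))))"
    unfolding code_power_def
  proof (rule restrict_cube_cong)
    fix z assume z: "z \<in> bvecs r"
    have neg_part: "min 0 (A i z) = a0 i * I i z + (\<Sum>j<n. a i j * (I i z * X j z))" for i
    proof -
      have "min 0 (A i z) = I i z * A i z" using z by (auto simp: I_def P_def min_def)
      then show ?thesis by (simp add: A_def algebra_simps sum_distrib_left)
    qed
    have "t ^ binval r z = weight_power n t (spread r z)"
      by (simp add: weight_power_def spread_weight n_def)
    also have "\<dots> = c + (\<Sum>j<n. b j * X j z) + (\<Sum>j<n. \<Sum>k<n. d j k * X j z * X k z)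
                     + (\<Sum>i<m. min 0 (A i z))"
      using H spread_bvecs[of r z] by (simp add: ylin_poly_min n_def X_def A_def)
    finally show "t ^ binval r z = c + (\<Sum>j<n. b j * X j z)
        + (\<Sum>j<n. \<Sum>k<n. d j k * (X j z * X k z))
        + (\<Sum>i<m. a0 i * I i z + (\<Sum>j<n. a i j * (I i z * X j z)))"
      by (simp add: neg_part mult.assoc)
  qed
  also have "\<dots> \<in> fun_vs.span (spanning_family r (map P [0..<m]))"
    unfolding X_def I_def by (rule minimised_form_in_span)
  finally show ?thesis
    by (intro bexI[of _ "map P [0..<m]"]) (auto simp: patterns_def P_def)
qed

lemma finite_quadratizable_with:
  assumes r: "r \<ge> 1" and small: "(r+1)^2 + m*(r+1) < 2^r"
  shows "finite {t. has_ylin_quadratization (2^r) m (weight_power (2^r) t)}"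
proof (rule finite_subset)
  show "{t. has_ylin_quadratization (2^r) m (weight_power (2^r) t)}
          \<subseteq> (\<Union>ps\<in>patterns r m. {t. code_power r t \<in> fun_vs.span (spanning_family r ps)})"
    using quadratization_gives_span by blast
  have "card (spanning_family r ps) < 2^r" if "ps \<in> patterns r m" for ps
    using card_spanning_family[of ps m r] that small by (simp add: patterns_def)
  then show "finite (\<Union>ps\<in>patterns r m. {t. code_power r t \<in> fun_vs.span (spanning_family r ps)})"
    by (intro finite_UN_I finite_patterns finite_code_power_in_span[OF r finite_spanning_family])
qed

lemma finite_cheaply_quadratizable:
  assumes r: "r \<ge> 1"
  shows "finite {t. \<exists>m. (r+1)^2 + m*(r+1) < 2^r \<and> has_ylin_quadratization (2^r) m (weight_power (2^r) t)}"
proof -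
  have "{m. (r+1)^2 + m*(r+1) < 2^r} \<subseteq> {..<2^r}"
    by (auto intro: order.strict_trans1[of _ "(r+1)^2 + _ * (r+1)"])
  then have "finite {m. (r+1)^2 + m*(r+1) < 2^r}" by (rule finite_subset) simp
  then have "finite (\<Union>m\<in>{m. (r+1)^2 + m*(r+1) < 2^r}.
               {t. has_ylin_quadratization (2^r) m (weight_power (2^r) t)})"
    using finite_quadratizable_with[OF r] by blast
  then show ?thesis by (rule finite_subset[rotated]) blast
qed


subsection \<open>The numerical estimate\<close>

lemma square_le_half_power: "r \<ge> 7 \<Longrightarrow> 2 * (r+1)^2 \<le> (2::nat)^r"
proof (induction r rule: dec_induct)
  case base
  then show ?case by simp
next
  case (step k)
  have "2 * (Suc k + 1)^2 = 2 * (k+1)^2 + 4*k + 6" by (simp add: power2_eq_square algebra_simps)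
  also have "\<dots> \<le> 2 * (k+1)^2 + 2 * (k+1)^2"
    using step(1) mult_le_mono[of 7 k 7 k] by (simp add: power2_eq_square algebra_simps)
  also have "\<dots> \<le> 2^Suc k" using step(3) by simp
  finally show ?case .
qed

lemma ln_2_ge_half: "ln (2::real) \<ge> 1/2"
proof -
  have "ln (1/2::real) \<le> 1/2 - 1" by (rule ln_le_minus_one) simp
  then show ?thesis by (simp add: ln_div)
qed

text \<open>If (r+1)^2 + m(r+1) \<ge> 2^r then m \<ge> n/(8 ln n) for n = 2^r: the square term is at most
  half of 2^r, so 2^r \<le> 2m(r+1) \<le> 4mr, while ln n = r ln 2 \<ge> r/2.\<close>
lemma many_auxiliaries:
  assumes r: "r \<ge> 7" and big: "(2::nat)^r \<le> (r+1)^2 + m*(r+1)"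
  shows "real m \<ge> 1/8 * real (2^r) / ln (real (2^r))"
proof -
  have "2^r \<le> 2 * (m*(r+1))" using big square_le_half_power[OF r] by linarith
  then have "real (2^r) \<le> 2 * (real m * (real r + 1))"
    by (metis of_nat_le_iff of_nat_mult of_nat_Suc of_nat_numeral Suc_eq_plus1 add.commute)
  also have "\<dots> \<le> 4 * (real m * real r)"
    using mult_left_mono[of "real r + 1" "2 * real r" "real m"] r by simp
  finally have pow: "real (2^r) \<le> 4 * (real m * real r)" .
  have ln_pow: "ln (real (2^r)) \<ge> real r / 2"
    using ln_2_ge_half mult_left_mono[OF ln_2_ge_half, of "real r"] by (simp add: ln_realpow)
  have "1/8 * real (2^r) \<le> real m * (real r / 2)" using pow by simp
  also have "\<dots> \<le> real m * ln (real (2^r))" by (intro mult_left_mono ln_pow) simp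
  finally show ?thesis using ln_pow r by (simp add: pos_divide_le_eq)
qed


theorem theorem8:
  shows "\<exists>C::real. C > 0 \<and> (\<forall>N::nat. \<exists>n\<ge>N. \<exists>f.
           symmetric_pbf n f \<and>
           (\<forall>m. has_ylin_quadratization n m f \<longrightarrow> real m \<ge> C * real n / ln (real n)))"
proof (intro exI[of _ "1/8"] conjI allI)
  fix N :: nat
  define r where "r = N + 7"
  have "N < 2^r" using less_exp[of r] unfolding r_def by linarith
  obtain t where t: "t \<notin> {t. \<exists>m. (r+1)^2 + m*(r+1) < 2^r
                               \<and> has_ylin_quadratization (2^r) m (weight_power (2^r) t)}"
    using ex_new_if_finite[OF infinite_UNIV_char_0 finite_cheaply_quadratizable[of r]] r_def by auto
  have "real m \<ge> 1/8 * real (2^r) / ln (real (2^r))"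
    if "has_ylin_quadratization (2^r) m (weight_power (2^r) t)" for m
    using t that many_auxiliaries[of r m] by (auto simp: r_def not_less)
  then show "\<exists>n\<ge>N. \<exists>f. symmetric_pbf n f \<and>
           (\<forall>m. has_ylin_quadratization n m f \<longrightarrow> real m \<ge> 1/8 * real n / ln (real n))"
    using \<open>N < 2^r\<close> weight_power_symmetric by (intro exI[of _ "2^r"]) auto
qed simp

end
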